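(* Let $Q=ABCD$ be a non-degenerate trapezoid of perimeter $2$, i.e. a convex quadrangle with $AB\parallel CD$, and let $Q^\circ=KLMN$ be its dual. Then $KL\parallel MN$; in particular $Q^\circ$ is a trapezoid.
   Context: Identify $\mathbb{R}^2$ with $\mathbb{C}$. A quadrangle $Q=ABCD$ is an ordered 4-tuple of points $A,B,C,D\in\mathbb{C}$: $A$ is the first vertex and the order $A\to B\to C\to D\to A$ is the direction of traversal. Its edge vectors are $z_1=B-A$, $z_2=C-B$, $z_3=D-C$, $z_4=A-D$, so $z_1+z_2+z_3+z_4=0$; its perimeter is $|z_1|+|z_2|+|z_3|+|z_4|$. $Q$ is non-degenerate if each pair of consecutive edge vectors $(z_1,z_2),(z_2,z_3),(z_3,z_4),(z_4,z_1)$ consists of nonzero, non-collinear vectors. A non-degenerate quadrangle is convex if no two opposite edges intersect and all its interior angles are less than $\pi$. Associated plane: for a non-degenerate $Q$ of perimeter $2$, choose $u_1,\dots,u_4\in\mathbb{C}$ with $u_k^2=z_k$, where $u_1$ is an arbitrary square root of $z_1$ and for $k=1,2,3$ the sign of $u_{k+1}$ is chosen so that $\operatorname{Im}(\overline{u_k}u_{k+1})$ has the same sign as $\operatorname{Im}(\overline{z_k}z_{k+1})$. Write $u_k=a_k+i b_k$ and $\bar a=(a_1,a_2,a_3,a_4)$, $\bar b=(b_1,b_2,b_3,b_4)$; these are orthonormal in $\mathbb{R}^4$. Let $\Pi=\operatorname{span}(\bar a,\bar b)$ and $\Pi^\perp$ its orthogonal complement. Dual quadrangle: choose an orthonormal basis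 $(\bar c,\bar d)$ of $\Pi^\perp$, put $w_k=(c_k+i d_k)^2$; then $\sum_k w_k=0$ and $\sum_k|w_k|=2$. The dual quadrangle $Q^\circ=KLMN$ is the quadrangle with $L-K=w_1$, $M-L=w_2$, $N-M=w_3$, $K-N=w_4$. It is determined up to rotation, reflection and translation. *)

theory Defs
  imports "HOL-Analysis.Analysis"
begin

definition edge :: "complex \<Rightarrow> complex \<Rightarrow> complex \<Rightarrow> complex \<Rightarrow> nat \<Rightarrow> complex" where
  "edge A B C D k = (if k = 1 then B - A else if k = 2 then C - B
                     else if k = 3 then D - C else A - D)"

definition nxt :: "nat \<Rightarrow> nat" where
  "nxt k = k mod 4 + 1"

text \<open>Cross product Im(conj z * w); zero iff z, w are collinear (as real vectors).\<close>
definition cross :: "complex \<Rightarrow> complex \<Rightarrow> real" where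
  "cross z w = Im (cnj z * w)"

definition perimeter :: "complex \<Rightarrow> complex \<Rightarrow> complex \<Rightarrow> complex \<Rightarrow> real" where
  "perimeter A B C D = (\<Sum>k\<in>{1..4}. cmod (edge A B C D k))"

definition nondegenerate :: "complex \<Rightarrow> complex \<Rightarrow> complex \<Rightarrow> complex \<Rightarrow> bool" where
  "nondegenerate A B C D \<longleftrightarrow>
     (\<forall>k\<in>{1..4}. edge A B C D k \<noteq> 0 \<and> edge A B C D (nxt k) \<noteq> 0 \<and>
                  cross (edge A B C D k) (edge A B C D (nxt k)) \<noteq> 0)"

text \<open>Convex: non-degenerate, opposite (closed) edges disjoint, and every interior
  angle less than pi, i.e. the polygon turns in the same direction at every vertex.\<close>
definition convex_quad :: "complex \<Rightarrow> complex \<Rightarrow> complex \<Rightarrow> complex \<Rightarrow> bool" where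
  "convex_quad A B C D \<longleftrightarrow> nondegenerate A B C D \<and>
     closed_segment A B \<inter> closed_segment C D = {} \<and>
     closed_segment B C \<inter> closed_segment D A = {} \<and>
     ((\<forall>k\<in>{1..4}. cross (edge A B C D k) (edge A B C D (nxt k)) > 0) \<or>
      (\<forall>k\<in>{1..4}. cross (edge A B C D k) (edge A B C D (nxt k)) < 0))"

definition assoc_roots :: "(nat \<Rightarrow> complex) \<Rightarrow> (nat \<Rightarrow> complex) \<Rightarrow> bool" where
  "assoc_roots z u \<longleftrightarrow> (\<forall>k\<in>{1..4}. (u k)\<^sup>2 = z k) \<and>
     (\<forall>k\<in>{1..3}. sgn (cross (u k) (u (k+1))) = sgn (cross (z k) (z (k+1))))"

text \<open>w_1..w_4 are edge vectors of a dual quadrangle of the quadrangle with edge vectors z: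
  for some admissible choice of roots u (giving a = Re u, b = Im u spanning Pi) and some
  orthonormal basis (c, d) of the orthogonal complement of Pi in R^4,
  w_k = (c_k + i d_k)^2.\<close>
definition dual_edges :: "(nat \<Rightarrow> complex) \<Rightarrow> (nat \<Rightarrow> complex) \<Rightarrow> bool" where
  "dual_edges z w \<longleftrightarrow> (\<exists>u c d. assoc_roots z u \<and>
     (\<Sum>k\<in>{1..4}. c k * c k) = 1 \<and> (\<Sum>k\<in>{1..4}. d k * d k) = 1 \<and>
     (\<Sum>k\<in>{1..4}. c k * d k) = 0 \<and>
     (\<Sum>k\<in>{1..4}. c k * Re (u k)) = 0 \<and> (\<Sum>k\<in>{1..4}. c k * Im (u k)) = 0 \<and>
     (\<Sum>k\<in>{1..4}. d k * Re (u k)) = 0 \<and> (\<Sum>k\<in>{1..4}. d k * Im (u k)) = 0 \<and>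
     (\<forall>k\<in>{1..4}. w k = (Complex (c k) (d k))\<^sup>2))"

end

theory Submission
  imports Defs
begin

text \<open>Write \<open>v\<^sub>k = c\<^sub>k + i d\<^sub>k\<close>, so \<open>w\<^sub>k = v\<^sub>k\<^sup>2\<close>. Since the perimeter is 2 and the
  edges close up, \<open>Re u, Im u, c, d\<close> are orthonormal in \<open>\<real>\<^sup>4\<close>, so the 4x4 matrix with these
  columns is orthogonal and its rows are orthogonal as well; rows 1 and 3 give
  \<open>Re (cnj u\<^sub>1 * u\<^sub>3) + Re (cnj v\<^sub>1 * v\<^sub>3) = 0\<close>. Convexity makes the parallel edges \<open>z\<^sub>1, z\<^sub>3\<close>
  point in opposite directions, so \<open>(cnj u\<^sub>1 * u\<^sub>3)\<^sup>2 = cnj z\<^sub>1 * z\<^sub>3\<close> is a negative real and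
  \<open>cnj u\<^sub>1 * u\<^sub>3\<close> is purely imaginary. Hence so is \<open>cnj v\<^sub>1 * v\<^sub>3\<close>, and its square
  \<open>cnj w\<^sub>1 * w\<^sub>3\<close> is real: \<open>KL \<parallel> MN\<close>.\<close>

lemma sum_atLeast1_4: "(\<Sum>k\<in>{1..4::nat}. f k) = f 1 + f 2 + f 3 + f 4"
  by (simp add: numeral_eq_Suc atLeastAtMostSuc_conv add.commute add.left_commute)

lemma orthonormal_columns_imp_orthogonal_rows:
  fixes a b c d :: "nat \<Rightarrow> real"
  assumes "(\<Sum>k\<in>{1..4}. a k * a k) = 1" "(\<Sum>k\<in>{1..4}. b k * b k) = 1"
    "(\<Sum>k\<in>{1..4}. c k * c k) = 1" "(\<Sum>k\<in>{1..4}. d k * d k) = 1"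
    "(\<Sum>k\<in>{1..4}. a k * b k) = 0" "(\<Sum>k\<in>{1..4}. c k * d k) = 0"
    "(\<Sum>k\<in>{1..4}. c k * a k) = 0" "(\<Sum>k\<in>{1..4}. c k * b k) = 0"
    "(\<Sum>k\<in>{1..4}. d k * a k) = 0" "(\<Sum>k\<in>{1..4}. d k * b k) = 0"
    and "i \<in> {1..4}" "j \<in> {1..4}" "i \<noteq> j"
  shows "a i * a j + b i * b j + c i * c j + d i * d j = 0"
proof -
  define idx :: "4 \<Rightarrow> nat" where
    "idx r = (if r = 1 then 1 else if r = 2 then 2 else if r = 3 then 3 else 4)" for r
  define col :: "4 \<Rightarrow> nat \<Rightarrow> real" where
    "col s = (if s = 1 then a else if s = 2 then b else if s = 3 then c else d)" for s
  define Q :: "real^4^4" where "Q = (\<chi> r s. col s (idx r))"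
  have distinct: "(1::4) \<noteq> 2" "(1::4) \<noteq> 3" "(1::4) \<noteq> 4" "(2::4) \<noteq> 3" "(2::4) \<noteq> 4" "(3::4) \<noteq> 4"
    by simp_all
  have "transpose Q ** Q = mat 1"
    using assms(1-10) unfolding vec_eq_iff forall_4 sum_atLeast1_4
    by (simp add: Q_def matrix_matrix_mult_def transpose_def mat_def sum_4 idx_def col_def
        distinct algebra_simps)
  then have "Q ** transpose Q = mat 1"
    using orthogonal_matrix orthogonal_matrix_def by blast
  then have rows: "\<forall>r s. r \<noteq> s \<longrightarrow>
      col 1 (idx r) * col 1 (idx s) + col 2 (idx r) * col 2 (idx s) +
      col 3 (idx r) * col 3 (idx s) + col 4 (idx r) * col 4 (idx s) = 0"
    by (simp add: vec_eq_iff Q_def matrix_matrix_mult_def transpose_def mat_def sum_4)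
  have onto: "\<exists>r. k = idx r" if "k \<in> {1..4}" for k
  proof -
    have "k = 1 \<or> k = 2 \<or> k = 3 \<or> k = 4" using that by auto
    then show ?thesis
    proof (elim disjE)
      show "\<exists>r. k = idx r" if "k = 1" using that by (intro exI[of _ 1]) (simp add: idx_def)
      show "\<exists>r. k = idx r" if "k = 2" using that by (intro exI[of _ 2]) (simp add: idx_def distinct)
      show "\<exists>r. k = idx r" if "k = 3" using that by (intro exI[of _ 3]) (simp add: idx_def distinct)
      show "\<exists>r. k = idx r" if "k = 4" using that by (intro exI[of _ 4]) (simp add: idx_def distinct)
    qed
  qed
  obtain r s where "i = idx r" "j = idx s"
    using onto assms(11,12) by blast
  moreover from this assms(13) have "r \<noteq> s" by blast
  ultimately show ?thesis
    using rows by (simp add: col_def distinct)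
qed

lemma cross_power2: "cross (z\<^sup>2) (w\<^sup>2) = 2 * Re (cnj z * w) * cross z w"
  by (simp add: cross_def power2_eq_square algebra_simps)

lemma Re_cnj_power2: "Re (cnj (z\<^sup>2) * w\<^sup>2) = (Re (cnj z * w))\<^sup>2 - (cross z w)\<^sup>2"
  by (simp add: cross_def power2_eq_square algebra_simps)

lemma Re_cnj_cross_identity:
  "Re (cnj z * x) * cross z y + (cmod z)\<^sup>2 * cross y x = Re (cnj z * y) * cross z x"
  unfolding cmod_power2 cross_def by (simp add: power2_eq_square algebra_simps)

lemma parallel_same_turn_imp_antiparallel:
  assumes "cross z x = 0" and "cross z y * cross y x > 0"
  shows "Re (cnj z * x) < 0"
proof -
  have "z \<noteq> 0" using assms(2) by (auto simp: cross_def)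
  then have pos: "(cmod z)\<^sup>2 * cross y x * cross z y > 0"
    using assms(2) by (simp add: mult.assoc mult.commute[of "cross y x"])
  have "Re (cnj z * x) * cross z y = - ((cmod z)\<^sup>2 * cross y x)"
    using Re_cnj_cross_identity[of z x y] assms(1) by simp
  then have "Re (cnj z * x) * (cross z y)\<^sup>2 = - ((cmod z)\<^sup>2 * cross y x * cross z y)"
    by (metis mult.assoc mult_minus_left power2_eq_square)
  with pos have "Re (cnj z * x) * (cross z y)\<^sup>2 < 0" by simp
  then show ?thesis
    by (meson mult_nonneg_nonneg not_less zero_le_power2)
qed

lemma Re_cnj_eq_0_if_squares_antiparallel:
  assumes "cross (z\<^sup>2) (w\<^sup>2) = 0" and "Re (cnj (z\<^sup>2) * w\<^sup>2) < 0"
  shows "Re (cnj z * w) = 0"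
  using assms unfolding cross_power2 Re_cnj_power2 by auto

lemma convex_quad_turns:
  assumes "convex_quad A B C D"
  shows "cross (B - A) (C - B) * cross (C - B) (D - C) > 0"
proof -
  let ?turn = "\<lambda>k. cross (edge A B C D k) (edge A B C D (nxt k))"
  have "?turn 1 = cross (B - A) (C - B)" "?turn 2 = cross (C - B) (D - C)"
    by (simp_all add: edge_def nxt_def)
  moreover have "(?turn 1 > 0 \<and> ?turn 2 > 0) \<or> (?turn 1 < 0 \<and> ?turn 2 < 0)"
    using assms unfolding convex_quad_def by auto
  ultimately show ?thesis by (auto intro: mult_pos_pos mult_neg_neg)
qed

lemma sum_edge: "(\<Sum>k\<in>{1..4}. edge A B C D k) = 0"
  unfolding sum_atLeast1_4 edge_def by simp

lemma square_roots_orthonormal: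
  fixes u :: "nat \<Rightarrow> complex"
  assumes "(\<Sum>k\<in>{1..4}. (u k)\<^sup>2) = 0" and "(\<Sum>k\<in>{1..4}. cmod ((u k)\<^sup>2)) = 2"
  shows "(\<Sum>k\<in>{1..4}. Re (u k) * Re (u k)) = 1" "(\<Sum>k\<in>{1..4}. Im (u k) * Im (u k)) = 1"
    "(\<Sum>k\<in>{1..4}. Re (u k) * Im (u k)) = 0"
proof -
  have cmod_sq: "cmod (z\<^sup>2) = Re z * Re z + Im z * Im z" for z
    by (simp only: norm_power cmod_power2) (simp add: power2_eq_square)
  have "Re (\<Sum>k\<in>{1..4}. (u k)\<^sup>2) = 0" "Im (\<Sum>k\<in>{1..4}. (u k)\<^sup>2) = 0"
    using assms(1) by simp_all
  with assms(2) show "(\<Sum>k\<in>{1..4}. Re (u k) * Re (u k)) = 1" "(\<Sum>k\<in>{1..4}. Im (u k) * Im (u k)) = 1"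
    "(\<Sum>k\<in>{1..4}. Re (u k) * Im (u k)) = 0"
    unfolding sum_atLeast1_4 cmod_sq by (simp_all add: power2_eq_square algebra_simps)
qed

theorem theorem8p1:
  fixes A B C D K L M N :: complex
  assumes "nondegenerate A B C D"
    and "convex_quad A B C D"
    and "cross (B - A) (D - C) = 0"
    and "perimeter A B C D = 2"
    and "dual_edges (edge A B C D) (edge K L M N)"
  shows "cross (L - K) (N - M) = 0"
proof -
  obtain u c d where roots: "assoc_roots (edge A B C D) u"
    and frame: "(\<Sum>k\<in>{1..4}. c k * c k) = 1" "(\<Sum>k\<in>{1..4}. d k * d k) = 1"
      "(\<Sum>k\<in>{1..4}. c k * d k) = 0"
      "(\<Sum>k\<in>{1..4}. c k * Re (u k)) = 0" "(\<Sum>k\<in>{1..4}. c k * Im (u k)) = 0"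
      "(\<Sum>k\<in>{1..4}. d k * Re (u k)) = 0" "(\<Sum>k\<in>{1..4}. d k * Im (u k)) = 0"
    and dual: "\<forall>k\<in>{1..4}. edge K L M N k = (Complex (c k) (d k))\<^sup>2"
    using assms(5) unfolding dual_edges_def by blast
  have edge_eq: "\<forall>k\<in>{1..4}. edge A B C D k = (u k)\<^sup>2"
    using roots unfolding assoc_roots_def by simp
  have z1: "B - A = (u 1)\<^sup>2" and z3: "D - C = (u 3)\<^sup>2"
    using edge_eq[rule_format, of 1] edge_eq[rule_format, of 3] by (simp_all add: edge_def)
  have "Re (cnj (B - A) * (D - C)) < 0"
    using parallel_same_turn_imp_antiparallel[OF assms(3) convex_quad_turns[OF assms(2)]] .
  with assms(3) have "Re (cnj (u 1) * u 3) = 0"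
    unfolding z1 z3 by (rule Re_cnj_eq_0_if_squares_antiparallel)
  moreover have "Re (u 1) * Re (u 3) + Im (u 1) * Im (u 3) + c 1 * c 3 + d 1 * d 3 = 0"
  proof (rule orthonormal_columns_imp_orthogonal_rows)
    show "(\<Sum>k\<in>{1..4}. Re (u k) * Re (u k)) = 1" "(\<Sum>k\<in>{1..4}. Im (u k) * Im (u k)) = 1"
      "(\<Sum>k\<in>{1..4}. Re (u k) * Im (u k)) = 0"
      using square_roots_orthonormal[of u] sum_edge[of A B C D] assms(4) edge_eq
      by (simp_all add: perimeter_def)
  qed (use frame in auto)
  ultimately have "Re (cnj (Complex (c 1) (d 1)) * Complex (c 3) (d 3)) = 0" by simp
  moreover have "L - K = (Complex (c 1) (d 1))\<^sup>2" "N - M = (Complex (c 3) (d 3))\<^sup>2"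
    using dual[rule_format, of 1] dual[rule_format, of 3] by (simp_all add: edge_def)
  ultimately show ?thesis by (simp add: cross_power2)
qed

end
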